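(* Assume $X$ satisfies the $G$-latent model with covariance $\Sigma=ACA^t+\Gamma$. If $\Delta(C)>\frac{2}{m}|\Gamma|_V$, then $B^*$ is the unique maximizer of $B\mapsto\langle\Sigma,B\rangle$ over $\mathcal{D}$.
   Context: Let $G=\{G_1,\dots,G_K\}$ be a partition of $[p]$ into nonempty groups, $k(a)$ the index with $a\in G_{k(a)}$, $m=\min_k|G_k|$. A centered random vector $X$ satisfies the $G$-latent model if $X_a=Z_{k(a)}+E_a$ for all $a$, where $Z\in\mathbb{R}^K$ is centered, $E\in\mathbb{R}^p$ is centered, independent of $Z$, with independent coordinates and $\mathrm{Var}(E_a)=\gamma_{k(a)}$. Then $\Sigma=\mathrm{Cov}(X)=ACA^t+\Gamma$ with $A_{ak}=1_{\{a\in G_k\}}$, $C=\mathrm{Cov}(Z)$, $\Gamma=\mathrm{diag}(\gamma_{k(a)})_a$. $\Delta(C)=\min_{j<k}(C_{jj}+C_{kk}-2C_{jk})$. For diagonal $D$, $|D|_V=\max_aD_{aa}-\min_aD_{aa}$. $B^*$ is the $p\times p$ matrix with $B^*_{ab}=1/|G_k|$ if $a,b\in G_k$ for some $k$, and $0$ otherwise. $\langle M,N\rangle=\mathrm{tr}(M^tN)$. $\mathcal{C}$ is the set of symmetric positive semidefinite $p\times p$ matrices $B$ with $\sum_aB_{ab}=1$ for all $b$, $B_{ab}\ge0$ for all $a,b$, and $\mathrm{tr}(B)=K$; $\mathcal{D}=\{B\in\mathcal{C}: B^2=B\}$. *)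

theory Defs
  imports "HOL-Analysis.Analysis"
begin

text \<open>Index set [p] is the finite type 'p, group labels [K] the finite type 'k.
  The partition G is given by the label map grp :: 'p => 'k (grp a = k(a));
  G_k = {a. grp a = k}; nonemptiness of all groups = surjectivity of grp.\<close>

definition group_of :: "('p \<Rightarrow> 'k) \<Rightarrow> 'k \<Rightarrow> 'p set" where
  "group_of grp k = {a. grp a = k}"

definition min_group_size :: "('p::finite \<Rightarrow> 'k::finite) \<Rightarrow> nat" where
  "min_group_size grp = Min (range (\<lambda>k. card (group_of grp k)))"

definition membership_matrix :: "('p::finite \<Rightarrow> 'k::finite) \<Rightarrow> real^'k^'p" where
  "membership_matrix grp = (\<chi> a k. if grp a = k then 1 else 0)"

definition diag_mat :: "real^'n \<Rightarrow> real^'n^'n" where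
  "diag_mat d = (\<chi> i j. if i = j then d $ i else 0)"

definition Gamma_mat :: "('p::finite \<Rightarrow> 'k::finite) \<Rightarrow> real^'k \<Rightarrow> real^'p^'p" where
  "Gamma_mat grp \<gamma> = diag_mat (\<chi> a. \<gamma> $ grp a)"

definition latent_cov :: "('p::finite \<Rightarrow> 'k::finite) \<Rightarrow> real^'k^'k \<Rightarrow> real^'k \<Rightarrow> real^'p^'p" where
  "latent_cov grp C \<gamma> =
     membership_matrix grp ** C ** transpose (membership_matrix grp) + Gamma_mat grp \<gamma>"

text \<open>Delta(C) = min over pairs of distinct labels; +infinity if K = 1 (empty min).\<close>
definition Delta :: "real^'k^'k \<Rightarrow> ereal" where
  "Delta C = (INF jk \<in> {(j,k). j \<noteq> k}. ereal (C $ fst jk $ fst jk + C $ snd jk $ snd jk - 2 * C $ fst jk $ snd jk))"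

definition diag_spread :: "real^'n::finite^'n \<Rightarrow> real" where
  "diag_spread D = Max (range (\<lambda>a. D $ a $ a)) - Min (range (\<lambda>a. D $ a $ a))"

definition Bstar :: "('p::finite \<Rightarrow> 'k::finite) \<Rightarrow> real^'p^'p" where
  "Bstar grp = (\<chi> a b. if grp a = grp b then 1 / real (card (group_of grp (grp a))) else 0)"

definition frob_inner :: "real^'n::finite^'n \<Rightarrow> real^'n^'n \<Rightarrow> real" where
  "frob_inner M N = trace (transpose M ** N)"

definition psd :: "real^'n::finite^'n \<Rightarrow> bool" where
  "psd M \<longleftrightarrow> transpose M = M \<and> (\<forall>x. 0 \<le> x \<bullet> (M *v x))"

definition setC :: "nat \<Rightarrow> (real^'p::finite^'p) set" where
  "setC K = {B. psd B \<and> (\<forall>b. (\<Sum>a\<in>UNIV. B $ a $ b) = 1) \<and> (\<forall>a b. 0 \<le> B $ a $ b)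
               \<and> trace B = real K}"

definition setD :: "nat \<Rightarrow> (real^'p::finite^'p) set" where
  "setD K = {B \<in> setC K. B ** B = B}"

end

(* For a symmetric B with unit row and column sums, writing C_jl = (C_jj + C_ll - v_jl)/2 with
   v_jl = Var(Z_j - Z_l) gives
     <Sigma, B> = sum_a C_k(a)k(a) - 1/2 sum_{k(c) ~= k(d)} v_k(c)k(d) B_cd + sum_a gamma_k(a) B_aa.
   B* carries no mass off the diagonal blocks and has diagonal block traces 1. For a general B,
   positive semidefiniteness gives |G_k| (1 - trace of block k) <= mass leaving block k, so the
   Gamma-term of B exceeds that of B* by at most |Gamma|_V / m times the off-block mass, while the
   C-term loses at least Delta(C)/2 times it. Hence the separation condition makes B* the maximizer,
   strictly unless B is block diagonal, and the only block-diagonal projection in D is B*. *)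

theory Submission
  imports Defs
begin

lemma sum_over_groups:
  fixes grp :: "'p::finite \<Rightarrow> 'k::finite"
  shows "(\<Sum>a\<in>UNIV. f a) = (\<Sum>k\<in>UNIV. \<Sum>a\<in>group_of grp k. f a)"
  using sum.group[of UNIV UNIV grp f] by (simp add: group_of_def)

lemma card_group_of_pos:
  fixes grp :: "'p::finite \<Rightarrow> 'k::finite"
  assumes "surj grp"
  shows "0 < card (group_of grp k)"
proof -
  obtain a where "grp a = k" using assms by (metis surjD)
  then show ?thesis by (auto simp: group_of_def card_gt_0_iff)
qed

lemma min_group_size_le:
  fixes grp :: "'p::finite \<Rightarrow> 'k::finite"
  shows "min_group_size grp \<le> card (group_of grp k)"
  unfolding min_group_size_def by (rule Min_le) auto

lemma min_group_size_pos:
  fixes grp :: "'p::finite \<Rightarrow> 'k::finite"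
  assumes "surj grp"
  shows "0 < min_group_size grp"
proof -
  have "min_group_size grp \<in> range (\<lambda>k. card (group_of grp k))"
    unfolding min_group_size_def by (rule Min_in) auto
  then show ?thesis using card_group_of_pos[OF assms] by auto
qed

lemma sum_div_card_group:
  fixes grp :: "'p::finite \<Rightarrow> 'k::finite"
  assumes "surj grp"
  shows "(\<Sum>a\<in>UNIV. h (grp a) / real (card (group_of grp (grp a)))) = (\<Sum>k\<in>UNIV. h k)"
proof -
  have "(\<Sum>a\<in>group_of grp k. h (grp a) / real (card (group_of grp (grp a)))) = h k" for k
    using card_group_of_pos[OF assms, of k] surjD[OF assms, of k] by (auto simp: group_of_def)
  then show ?thesis by (simp add: sum_over_groups[of _ grp])
qed

lemma psd_axis_diff:
  fixes M :: "real^'n::finite^'n"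
  assumes "psd M"
  shows "0 \<le> M $ i $ i - M $ i $ j - M $ j $ i + M $ j $ j"
proof -
  define x :: "real^'n" where "x = axis i 1 - axis j 1"
  have "0 \<le> x \<bullet> (M *v x)" using assms by (simp add: psd_def)
  also have "\<dots> = M $ i $ i - M $ i $ j - M $ j $ i + M $ j $ j"
    unfolding x_def
    by (simp add: matrix_vector_mult_diff_distrib inner_diff_left inner_diff_right inner_axis')
      (simp add: matrix_vector_mult_def axis_def if_distrib cong: if_cong)
  finally show ?thesis .
qed

lemma psd_block_sum_le:
  fixes M :: "real^'n::finite^'n"
  assumes "psd M"
  shows "(\<Sum>i\<in>S. \<Sum>j\<in>S. M $ i $ j) \<le> real (card S) * (\<Sum>i\<in>S. M $ i $ i)"
proof -
  have "0 \<le> (\<Sum>i\<in>S. \<Sum>j\<in>S. M $ i $ i - M $ i $ j - M $ j $ i + M $ j $ j)"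
    using psd_axis_diff[OF assms] by (intro sum_nonneg) auto
  also have "\<dots> = 2 * (real (card S) * (\<Sum>i\<in>S. M $ i $ i) - (\<Sum>i\<in>S. \<Sum>j\<in>S. M $ i $ j))"
    by (simp add: sum.distrib sum_subtractf sum.swap[of "\<lambda>i j. M $ j $ i"] sum_distrib_left sum_negf)
  finally show ?thesis by simp
qed

lemma row_stochastic_block_split:
  fixes M :: "real^'n::finite^'n"
  assumes "\<And>i. (\<Sum>j\<in>UNIV. M $ i $ j) = 1"
  shows "(\<Sum>i\<in>S. \<Sum>j\<in>S. M $ i $ j) + (\<Sum>i\<in>S. \<Sum>j\<in>-S. M $ i $ j) = real (card S)"
proof -
  have "(\<Sum>j\<in>S. M $ i $ j) + (\<Sum>j\<in>-S. M $ i $ j) = 1" for i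
    using sum.subset_diff[of S UNIV "\<lambda>j. M $ i $ j"] assms[of i] by (simp add: Compl_eq_Diff_UNIV)
  then show ?thesis by (simp flip: sum.distrib)
qed

lemma setCD:
  assumes "B \<in> setC K"
  shows "psd B" and "(\<Sum>a\<in>UNIV. B $ a $ b) = 1" and "(\<Sum>b\<in>UNIV. B $ a $ b) = 1"
    and "0 \<le> B $ a $ b" and "(\<Sum>a\<in>UNIV. B $ a $ a) = real K" and "B $ b $ a = B $ a $ b"
proof -
  show psd: "psd B" and cols: "(\<Sum>a\<in>UNIV. B $ a $ b) = 1" for b
    using assms by (simp_all add: setC_def)
  show sym: "B $ b $ a = B $ a $ b" for a b
    using psd unfolding psd_def by (metis transpose_def vec_lambda_beta)
  show "(\<Sum>b\<in>UNIV. B $ a $ b) = 1" using cols[of a] by (simp add: sym)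
  show "0 \<le> B $ a $ b" "(\<Sum>a\<in>UNIV. B $ a $ a) = real K"
    using assms by (simp_all add: setC_def trace_def)
qed

lemma setC_diag_deficit:
  assumes "B \<in> setC K"
  shows "real (card S) * (1 - (\<Sum>i\<in>S. B $ i $ i)) \<le> (\<Sum>i\<in>S. \<Sum>j\<in>-S. B $ i $ j)"
  using psd_block_sum_le[OF setCD(1)[OF assms], of S]
    row_stochastic_block_split[OF setCD(3)[OF assms], of S]
  by (simp add: algebra_simps)

lemma sum_sum_nonneg_eq_0D:
  assumes "finite A" and "\<And>i. i \<in> A \<Longrightarrow> finite (S i)"
    and "\<And>i j. i \<in> A \<Longrightarrow> j \<in> S i \<Longrightarrow> 0 \<le> (f i j :: real)"
    and "(\<Sum>i\<in>A. \<Sum>j\<in>S i. f i j) = 0" and "i \<in> A" and "j \<in> S i"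
  shows "f i j = 0"
proof -
  have "0 \<le> (\<Sum>j\<in>S i. f i j)" if "i \<in> A" for i
    using assms(3) that by (intro sum_nonneg) auto
  then have "(\<Sum>j\<in>S i. f i j) = 0"
    using sum_nonneg_eq_0_iff[OF assms(1), of "\<lambda>i. \<Sum>j\<in>S i. f i j"] assms(4,5) by blast
  then show ?thesis
    using sum_nonneg_eq_0_iff[OF assms(2)[OF assms(5)], of "f i"] assms(3,5,6) by blast
qed

definition off_block_sum :: "('p::finite \<Rightarrow> 'k) \<Rightarrow> ('p \<Rightarrow> 'p \<Rightarrow> real) \<Rightarrow> real" where
  "off_block_sum grp f = (\<Sum>c\<in>UNIV. \<Sum>d\<in>{d. grp d \<noteq> grp c}. f c d)"

lemma off_block_sum_nonneg:
  assumes "\<And>c d. grp c \<noteq> grp d \<Longrightarrow> 0 \<le> f c d"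
  shows "0 \<le> off_block_sum grp f"
  unfolding off_block_sum_def using assms by (intro sum_nonneg) auto

lemma off_block_sum_eq_0D:
  assumes "\<And>c d. grp c \<noteq> grp d \<Longrightarrow> 0 \<le> f c d" and "off_block_sum grp f = 0"
    and "grp c \<noteq> grp d"
  shows "f c d = 0"
  using assms sum_sum_nonneg_eq_0D[of UNIV "\<lambda>c. {d. grp d \<noteq> grp c}" f c d]
  unfolding off_block_sum_def by auto

lemma sum_sum_eq_off_block_sum:
  fixes grp :: "'p::finite \<Rightarrow> 'k"
  assumes "\<And>c d. grp c = grp d \<Longrightarrow> f c d = 0"
  shows "(\<Sum>c\<in>UNIV. \<Sum>d\<in>UNIV. f c d) = off_block_sum grp f"
  unfolding off_block_sum_def using assms by (intro sum.cong refl sum.mono_neutral_right) auto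

lemma off_block_sum_by_groups:
  fixes grp :: "'p::finite \<Rightarrow> 'k::finite"
  shows "off_block_sum grp f = (\<Sum>k\<in>UNIV. \<Sum>c\<in>group_of grp k. \<Sum>d\<in>-group_of grp k. f c d)"
  unfolding off_block_sum_def
  by (subst sum_over_groups[of _ grp]) (auto simp: group_of_def intro!: sum.cong)

text \<open>For \<open>C = Cov(Z)\<close> this is \<open>Var(Z_j - Z_l)\<close>; \<open>Delta C\<close> is its minimum over \<open>j \<noteq> l\<close>.\<close>

definition var_diff :: "real^'k^'k \<Rightarrow> 'k \<Rightarrow> 'k \<Rightarrow> real" where
  "var_diff C j l = C $ j $ j + C $ l $ l - 2 * C $ j $ l"

lemma Delta_less_var_diff:
  assumes "ereal r < Delta C" and "j \<noteq> l"
  shows "r < var_diff C j l"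
proof -
  have "Delta C \<le> ereal (var_diff C j l)"
    unfolding Delta_def var_diff_def using assms(2) by (intro INF_lower2[of "(j, l)"]) auto
  with assms(1) have "ereal r < ereal (var_diff C j l)" by (rule less_le_trans)
  then show ?thesis by simp
qed

lemma latent_cov_entry:
  "latent_cov grp C \<gamma> $ a $ b = C $ grp a $ grp b + (if a = b then \<gamma> $ grp a else 0)"
  by (simp add: latent_cov_def matrix_matrix_mult_def membership_matrix_def transpose_def
      Gamma_mat_def diag_mat_def mult_if_delta mult.commute[of _ "if _ then 1 else 0"])

lemma frob_inner_latent_cov:
  fixes grp :: "'p::finite \<Rightarrow> 'k::finite" and B :: "real^'p^'p"
  assumes rows: "\<And>a. (\<Sum>b\<in>UNIV. B $ a $ b) = 1" and cols: "\<And>b. (\<Sum>a\<in>UNIV. B $ a $ b) = 1"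
  shows "frob_inner (latent_cov grp C \<gamma>) B = (\<Sum>a\<in>UNIV. C $ grp a $ grp a)
     - off_block_sum grp (\<lambda>c d. var_diff C (grp c) (grp d) * B $ c $ d) / 2
     + (\<Sum>a\<in>UNIV. \<gamma> $ grp a * B $ a $ a)"
proof -
  have entry: "latent_cov grp C \<gamma> $ c $ d * B $ c $ d =
     C $ grp c $ grp c / 2 * B $ c $ d + C $ grp d $ grp d / 2 * B $ c $ d
     - var_diff C (grp c) (grp d) * B $ c $ d / 2 + (if c = d then \<gamma> $ grp c * B $ c $ c else 0)"
    for c d by (auto simp: latent_cov_entry var_diff_def field_simps)
  have "frob_inner (latent_cov grp C \<gamma>) B
      = (\<Sum>c\<in>UNIV. \<Sum>d\<in>UNIV. latent_cov grp C \<gamma> $ c $ d * B $ c $ d)"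
    unfolding frob_inner_def trace_def
    by (simp add: matrix_matrix_mult_def transpose_def) (rule sum.swap)
  also have "\<dots> = (\<Sum>c\<in>UNIV. \<Sum>d\<in>UNIV. C $ grp c $ grp c / 2 * B $ c $ d)
     + (\<Sum>c\<in>UNIV. \<Sum>d\<in>UNIV. C $ grp d $ grp d / 2 * B $ c $ d)
     - (\<Sum>c\<in>UNIV. \<Sum>d\<in>UNIV. var_diff C (grp c) (grp d) * B $ c $ d) / 2
     + (\<Sum>c\<in>UNIV. \<gamma> $ grp c * B $ c $ c)"
    unfolding entry by (simp add: sum.distrib sum_subtractf sum_divide_distrib)
  also have "(\<Sum>c\<in>UNIV. \<Sum>d\<in>UNIV. C $ grp c $ grp c / 2 * B $ c $ d) = (\<Sum>c\<in>UNIV. C $ grp c $ grp c / 2)"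
    by (simp only: sum_distrib_left[symmetric] rows mult_1_right)
  also have "(\<Sum>c\<in>UNIV. \<Sum>d\<in>UNIV. C $ grp d $ grp d / 2 * B $ c $ d) = (\<Sum>d\<in>UNIV. C $ grp d $ grp d / 2)"
    by (subst sum.swap) (simp only: sum_distrib_left[symmetric] cols mult_1_right)
  also have "(\<Sum>c\<in>UNIV. \<Sum>d\<in>UNIV. var_diff C (grp c) (grp d) * B $ c $ d)
      = off_block_sum grp (\<lambda>c d. var_diff C (grp c) (grp d) * B $ c $ d)"
    by (rule sum_sum_eq_off_block_sum) (simp add: var_diff_def)
  finally show ?thesis by (simp add: sum_divide_distrib[symmetric])
qed

lemma Bstar_entry:
  "Bstar grp $ a $ b = (if grp a = grp b then 1 / real (card (group_of grp (grp a))) else 0)"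
  by (simp add: Bstar_def)

lemma sum_if_same_group:
  fixes grp :: "'p::finite \<Rightarrow> 'k"
  shows "(\<Sum>a\<in>UNIV. if grp a = k then c else 0) = real (card (group_of grp k)) * c"
  by (simp add: sum.If_cases group_of_def)

lemma Bstar_psd:
  fixes grp :: "'p::finite \<Rightarrow> 'k::finite"
  assumes "surj grp"
  shows "psd (Bstar grp)"
  unfolding psd_def
proof (intro conjI allI)
  show "transpose (Bstar grp) = Bstar grp"
    by (auto simp: vec_eq_iff transpose_def Bstar_entry)
next
  fix x :: "real^'p"
  define n where "n k = real (card (group_of grp k))" for k
  define S where "S k = (\<Sum>j\<in>group_of grp k. x $ j)" for k
  have "(Bstar grp *v x) $ i = S (grp i) / n (grp i)" for i
    unfolding matrix_vector_mult_def S_def n_def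
    by (simp add: Bstar_entry if_distrib[of "\<lambda>t. t * _"] sum.If_cases group_of_def
        eq_commute[of "grp i"] sum_divide_distrib cong: if_cong)
  then have "x \<bullet> (Bstar grp *v x) = (\<Sum>i\<in>UNIV. x $ i * S (grp i) / n (grp i))"
    by (simp add: inner_vec_def)
  also have "\<dots> = (\<Sum>k\<in>UNIV. S k * S k / n k)"
    unfolding sum_over_groups[of _ grp]
    by (auto simp: S_def group_of_def sum_divide_distrib sum_distrib_right intro!: sum.cong)
  also have "\<dots> \<ge> 0"
    using card_group_of_pos[OF assms] by (intro sum_nonneg) (simp add: n_def)
  finally show "0 \<le> x \<bullet> (Bstar grp *v x)" .
qed

lemma Bstar_idem:
  fixes grp :: "'p::finite \<Rightarrow> 'k::finite"
  assumes "surj grp"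
  shows "Bstar grp ** Bstar grp = Bstar grp"
proof -
  have "(\<Sum>b\<in>UNIV. Bstar grp $ a $ b * Bstar grp $ b $ c) = Bstar grp $ a $ c" for a c
  proof -
    define n where "n = real (card (group_of grp (grp a)))"
    have "n > 0" using card_group_of_pos[OF assms] by (simp add: n_def)
    have "(\<Sum>b\<in>UNIV. Bstar grp $ a $ b * Bstar grp $ b $ c)
        = (\<Sum>b\<in>UNIV. if grp b = grp a then (if grp a = grp c then 1 / (n * n) else 0) else 0)"
      by (intro sum.cong refl) (auto simp: Bstar_entry n_def)
    also have "\<dots> = Bstar grp $ a $ c"
      using \<open>n > 0\<close> by (auto simp: sum_if_same_group Bstar_entry n_def)
    finally show ?thesis .
  qed
  then show ?thesis by (simp add: vec_eq_iff matrix_matrix_mult_def)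
qed

lemma Bstar_in_setD:
  fixes grp :: "'p::finite \<Rightarrow> 'k::finite"
  assumes surj: "surj grp"
  shows "Bstar grp \<in> setD CARD('k)"
proof -
  have "(\<Sum>a\<in>UNIV. Bstar grp $ a $ b) = 1" for b
  proof -
    have "(\<Sum>a\<in>UNIV. Bstar grp $ a $ b)
        = (\<Sum>a\<in>UNIV. if grp a = grp b then 1 / real (card (group_of grp (grp b))) else 0)"
      by (intro sum.cong refl) (simp add: Bstar_entry)
    then show ?thesis
      using card_group_of_pos[OF surj, of "grp b"] by (simp add: sum_if_same_group card_gt_0_iff)
  qed
  moreover have "trace (Bstar grp) = real CARD('k)"
    using sum_div_card_group[OF surj, of "\<lambda>k. 1"] by (simp add: trace_def Bstar_entry)
  ultimately have "Bstar grp \<in> setC CARD('k)"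
    unfolding setC_def using Bstar_psd[OF surj] by (simp add: Bstar_entry)
  then show ?thesis
    unfolding setD_def using Bstar_idem[OF surj] by simp
qed

lemma diag_gamma_le:
  fixes grp :: "'p::finite \<Rightarrow> 'k::finite" and \<gamma> :: "real^'k"
  assumes B: "B \<in> setC CARD('k)" and surj: "surj grp"
    and le_g: "\<And>k. \<gamma> $ k \<le> g" and spread: "\<And>k. g - \<gamma> $ k \<le> V"
  shows "(\<Sum>a\<in>UNIV. \<gamma> $ grp a * B $ a $ a)
    \<le> (\<Sum>k\<in>UNIV. \<gamma> $ k) + V / real (min_group_size grp) * off_block_sum grp (\<lambda>c d. B $ c $ d)"
proof -
  define m where "m = real (min_group_size grp)"
  define T where "T k = (\<Sum>a\<in>group_of grp k. B $ a $ a)" for k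
  \<comment> \<open>The block traces sum to \<open>K\<close>, so \<open>g\<close> may be subtracted from every \<open>\<gamma>$k\<close> for free.\<close>
  define L where "L k = (\<Sum>c\<in>group_of grp k. \<Sum>d\<in>-group_of grp k. B $ c $ d)" for k
  have per_group: "(g - \<gamma> $ k) * (1 - T k) \<le> V / m * L k" for k
  proof -
    define n where "n = real (card (group_of grp k))"
    have "0 < m" "m \<le> n"
      using min_group_size_pos[OF surj] min_group_size_le[of grp k] by (simp_all add: m_def n_def)
    have "0 \<le> L k" unfolding L_def using setCD(4)[OF B] by (intro sum_nonneg) auto
    have "1 - T k \<le> L k / n"
      using setC_diag_deficit[OF B, of "group_of grp k"] \<open>0 < m\<close> \<open>m \<le> n\<close>
      by (simp add: pos_le_divide_eq mult.commute T_def L_def n_def)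
    then have "(g - \<gamma> $ k) * (1 - T k) \<le> (g - \<gamma> $ k) * (L k / n)"
      using le_g[of k] by (intro mult_left_mono) auto
    also have "\<dots> \<le> V * (L k / n)"
      using spread[of k] \<open>0 \<le> L k\<close> \<open>0 < m\<close> \<open>m \<le> n\<close> by (intro mult_right_mono) auto
    also have "\<dots> \<le> V * (L k / m)"
      using le_g[of k] spread[of k] \<open>0 \<le> L k\<close> \<open>0 < m\<close> \<open>m \<le> n\<close>
      by (intro mult_left_mono divide_left_mono) auto
    finally show ?thesis by simp
  qed
  have "(\<Sum>a\<in>UNIV. \<gamma> $ grp a * B $ a $ a) = (\<Sum>k\<in>UNIV. \<gamma> $ k * T k)"
    unfolding T_def sum_over_groups[of _ grp] by (auto simp: sum_distrib_left group_of_def intro!: sum.cong)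
  moreover have "(\<Sum>k\<in>UNIV. T k) = real CARD('k)"
    using setCD(5)[OF B] unfolding T_def sum_over_groups[of _ grp] .
  ultimately have "(\<Sum>a\<in>UNIV. \<gamma> $ grp a * B $ a $ a) - (\<Sum>k\<in>UNIV. \<gamma> $ k)
      = (\<Sum>k\<in>UNIV. (g - \<gamma> $ k) * (1 - T k))"
    by (simp add: algebra_simps sum_subtractf sum.distrib flip: sum_distrib_left)
  also have "\<dots> \<le> (\<Sum>k\<in>UNIV. V / m * L k)"
    by (rule sum_mono) (rule per_group)
  also have "\<dots> = V / m * off_block_sum grp (\<lambda>c d. B $ c $ d)"
    unfolding off_block_sum_by_groups L_def by (simp add: sum_distrib_left)
  finally show ?thesis by (simp add: m_def)
qed

lemma frob_inner_Bstar_gap: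
  fixes grp :: "'p::finite \<Rightarrow> 'k::finite" and \<gamma> :: "real^'k"
  assumes B: "B \<in> setC CARD('k)" and surj: "surj grp"
    and le_g: "\<And>k. \<gamma> $ k \<le> g" and spread: "\<And>k. g - \<gamma> $ k \<le> V"
  shows "off_block_sum grp (\<lambda>c d. (var_diff C (grp c) (grp d) / 2 - V / real (min_group_size grp)) * B $ c $ d)
    \<le> frob_inner (latent_cov grp C \<gamma>) (Bstar grp) - frob_inner (latent_cov grp C \<gamma>) B"
proof -
  define m where "m = real (min_group_size grp)"
  have Bstar: "Bstar grp \<in> setC CARD('k)"
    using Bstar_in_setD[OF surj] by (simp add: setD_def)
  have "off_block_sum grp (\<lambda>c d. var_diff C (grp c) (grp d) * Bstar grp $ c $ d) = 0"
    unfolding off_block_sum_def by (intro sum.neutral ballI) (simp add: Bstar_entry)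
  moreover have "(\<Sum>a\<in>UNIV. \<gamma> $ grp a * Bstar grp $ a $ a) = (\<Sum>k\<in>UNIV. \<gamma> $ k)"
    using sum_div_card_group[OF surj, of "\<lambda>k. \<gamma> $ k"] by (simp add: Bstar_entry)
  ultimately have "frob_inner (latent_cov grp C \<gamma>) (Bstar grp)
      = (\<Sum>a\<in>UNIV. C $ grp a $ grp a) + (\<Sum>k\<in>UNIV. \<gamma> $ k)"
    using frob_inner_latent_cov[of "Bstar grp" grp C \<gamma>] setCD(2,3)[OF Bstar] by simp
  moreover have "frob_inner (latent_cov grp C \<gamma>) B = (\<Sum>a\<in>UNIV. C $ grp a $ grp a)
      - off_block_sum grp (\<lambda>c d. var_diff C (grp c) (grp d) * B $ c $ d) / 2
      + (\<Sum>a\<in>UNIV. \<gamma> $ grp a * B $ a $ a)"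
    using setCD(3,2)[OF B] by (rule frob_inner_latent_cov)
  moreover have "off_block_sum grp (\<lambda>c d. (var_diff C (grp c) (grp d) / 2 - V / m) * B $ c $ d)
      = off_block_sum grp (\<lambda>c d. var_diff C (grp c) (grp d) * B $ c $ d) / 2
        - V / m * off_block_sum grp (\<lambda>c d. B $ c $ d)"
    unfolding off_block_sum_def
    by (simp add: left_diff_distrib sum_subtractf sum_divide_distrib sum_distrib_left mult.assoc)
  ultimately show ?thesis
    using diag_gamma_le[OF B surj le_g spread] by (simp add: m_def)
qed

lemma block_diagonal_setD_eq_Bstar:
  fixes grp :: "'p::finite \<Rightarrow> 'k::finite"
  assumes B: "B \<in> setD CARD('k)" and surj: "surj grp"
    and off: "\<And>c d. grp c \<noteq> grp d \<Longrightarrow> B $ c $ d = 0"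
  shows "B = Bstar grp"
proof -
  have BC: "B \<in> setC CARD('k)" using B by (simp add: setD_def)
  define n where "n a = real (card (group_of grp (grp a)))" for a
  have n_pos: "0 < n a" for a using card_group_of_pos[OF surj] by (simp add: n_def)
  \<comment> \<open>Idempotence and unit row sums make each row of \<open>q\<close> sum to \<open>B$a$a - 1/n a\<close>, and the trace
    constraint makes these sum to zero.\<close>
  define q where "q a c = (if grp a = grp c then (B $ a $ c - 1 / n a)\<^sup>2 else 0)" for a c
  have row_q: "(\<Sum>c\<in>UNIV. q a c) = B $ a $ a - 1 / n a" for a
  proof -
    have "(B ** B) $ a $ a = B $ a $ a" using B by (simp add: setD_def)
    then have idem: "(\<Sum>c\<in>UNIV. B $ a $ c * B $ c $ a) = B $ a $ a"
      by (simp add: matrix_matrix_mult_def)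
    have "q a c = B $ a $ c * B $ c $ a - 2 / n a * B $ a $ c
        + (if grp c = grp a then 1 / (n a * n a) else 0)" for c
      unfolding q_def using off[of a c] setCD(6)[OF BC, of a c]
      by (auto simp: power2_eq_square algebra_simps)
    then have "(\<Sum>c\<in>UNIV. q a c) = (\<Sum>c\<in>UNIV. B $ a $ c * B $ c $ a)
        - (\<Sum>c\<in>UNIV. 2 / n a * B $ a $ c) + (\<Sum>c\<in>UNIV. if grp c = grp a then 1 / (n a * n a) else 0)"
      by (simp only: sum.distrib sum_subtractf)
    also have "\<dots> = (\<Sum>c\<in>UNIV. B $ a $ c * B $ c $ a)
        - 2 / n a * (\<Sum>c\<in>UNIV. B $ a $ c) + n a * (1 / (n a * n a))"
      unfolding sum_distrib_left[symmetric] sum_if_same_group n_def[symmetric] ..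
    also have "\<dots> = B $ a $ a - 1 / n a"
      using n_pos[of a] unfolding idem setCD(3)[OF BC] by (simp add: field_simps)
    finally show ?thesis .
  qed
  have "(\<Sum>a\<in>UNIV. \<Sum>c\<in>UNIV. q a c) = (\<Sum>a\<in>UNIV. B $ a $ a) - (\<Sum>a\<in>UNIV. 1 / n a)"
    unfolding row_q by (simp add: sum_subtractf)
  also have "\<dots> = 0"
    using setCD(5)[OF BC] sum_div_card_group[OF surj, of "\<lambda>k. 1"] by (simp add: n_def)
  finally have "q a c = 0" for a c
    by (intro sum_sum_nonneg_eq_0D[of UNIV "\<lambda>_. UNIV" q]) (auto simp: q_def)
  then have "B $ a $ c = 1 / n a" if "grp a = grp c" for a c
    using that by (metis (no_types) q_def power_eq_0_iff right_minus_eq)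
  then show ?thesis
    using off by (auto simp: vec_eq_iff Bstar_entry n_def)
qed

lemma diff_le_diag_spread_Gamma_mat:
  fixes grp :: "'p::finite \<Rightarrow> 'k::finite"
  assumes "surj grp"
  shows "\<gamma> $ j - \<gamma> $ k \<le> diag_spread (Gamma_mat grp \<gamma>)"
proof -
  obtain a b where "grp a = j" "grp b = k" using surjD[OF assms] by metis
  then have "\<gamma> $ j \<le> Max (range (\<lambda>a. \<gamma> $ grp a))" "Min (range (\<lambda>a. \<gamma> $ grp a)) \<le> \<gamma> $ k"
    by (auto intro!: Max_ge Min_le)
  then show ?thesis by (simp add: diag_spread_def Gamma_mat_def diag_mat_def)
qed

lemma Bstar_maximal:
  fixes grp :: "'p::finite \<Rightarrow> 'k::finite" and \<gamma> :: "real^'k"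
  assumes B: "B \<in> setD CARD('k)" and surj: "surj grp"
    and le_g: "\<And>k. \<gamma> $ k \<le> g" and spread: "\<And>k. g - \<gamma> $ k \<le> V"
    and sep: "\<And>j l. j \<noteq> l \<Longrightarrow> 2 / real (min_group_size grp) * V < var_diff C j l"
  shows "frob_inner (latent_cov grp C \<gamma>) B \<le> frob_inner (latent_cov grp C \<gamma>) (Bstar grp)"
    and "frob_inner (latent_cov grp C \<gamma>) (Bstar grp) \<le> frob_inner (latent_cov grp C \<gamma>) B
      \<Longrightarrow> B = Bstar grp"
proof -
  let ?f = "frob_inner (latent_cov grp C \<gamma>)"
  define w where "w c d = var_diff C (grp c) (grp d) / 2 - V / real (min_group_size grp)" for c d
  have BC: "B \<in> setC CARD('k)" using B by (simp add: setD_def)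
  have w_pos: "0 < w c d" if "grp c \<noteq> grp d" for c d
    using sep[OF that] by (simp add: w_def field_simps)
  have weighted_nonneg: "0 \<le> w c d * B $ c $ d" if "grp c \<noteq> grp d" for c d
    using w_pos[OF that] setCD(4)[OF BC] by simp
  have gap: "off_block_sum grp (\<lambda>c d. w c d * B $ c $ d) \<le> ?f (Bstar grp) - ?f B"
    using frob_inner_Bstar_gap[OF BC surj le_g spread] by (simp add: w_def)
  moreover have gap_nonneg: "0 \<le> off_block_sum grp (\<lambda>c d. w c d * B $ c $ d)"
    by (rule off_block_sum_nonneg) (rule weighted_nonneg)
  ultimately show "?f B \<le> ?f (Bstar grp)" by linarith
  assume "?f (Bstar grp) \<le> ?f B"
  with gap gap_nonneg have zero: "off_block_sum grp (\<lambda>c d. w c d * B $ c $ d) = 0" by linarith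
  have "B $ c $ d = 0" if "grp c \<noteq> grp d" for c d
    using off_block_sum_eq_0D[where f="\<lambda>c d. w c d * B $ c $ d", OF weighted_nonneg zero that]
      w_pos[OF that] by simp
  then show "B = Bstar grp" by (rule block_diagonal_setD_eq_Bstar[OF B surj])
qed

theorem mainTheorem2:
  fixes grp :: "'p::finite \<Rightarrow> 'k::finite"
    and C :: "real^'k^'k" and \<gamma> :: "real^'k"
  assumes partition: "surj grp"
    and C_cov: "psd C"
    and gamma_nonneg: "\<forall>k. 0 \<le> \<gamma> $ k"
    and sep: "Delta C > ereal (2 / real (min_group_size grp) * diag_spread (Gamma_mat grp \<gamma>))"
  shows "{B \<in> setD CARD('k). \<forall>B' \<in> setD CARD('k).
            frob_inner (latent_cov grp C \<gamma>) B' \<le> frob_inner (latent_cov grp C \<gamma>) B}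
         = {Bstar grp}"
proof -
  let ?f = "frob_inner (latent_cov grp C \<gamma>)"
  define V where "V = diag_spread (Gamma_mat grp \<gamma>)"
  define g where "g = Max (range (\<lambda>k. \<gamma> $ k))"
  have le_g: "\<gamma> $ k \<le> g" for k unfolding g_def by (rule Max_ge) auto
  have "g \<in> range (\<lambda>k. \<gamma> $ k)" unfolding g_def by (rule Max_in) auto
  then have spread: "g - \<gamma> $ k \<le> V" for k
    using diff_le_diag_spread_Gamma_mat[OF partition] by (auto simp: V_def)
  have "2 / real (min_group_size grp) * V < var_diff C j l" if "j \<noteq> l" for j l
    using Delta_less_var_diff[OF sep that] by (simp add: V_def)
  note maximal = Bstar_maximal[OF _ partition le_g spread this]
  show ?thesis
  proof (intro equalityI subsetI)
    fix B assume "B \<in> {B \<in> setD CARD('k). \<forall>B' \<in> setD CARD('k). ?f B' \<le> ?f B}"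
    then have "B \<in> setD CARD('k)" and "?f (Bstar grp) \<le> ?f B"
      using Bstar_in_setD[OF partition] by auto
    then show "B \<in> {Bstar grp}" using maximal(2) by blast
  qed (use maximal(1) Bstar_in_setD[OF partition] in auto)
qed

end
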